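(* Let $I$ and $J$ be finite index sets, let $X=\{x_i\}_{i\in I}$ be a finite set of player types and $Y=\{y_j\}_{j\in J}$ a finite set of strategies. Let $\mu=\{\mu_i\}_{i\in I}$ with $\mu_i\ge 0$ and $\sum_{i\in I}\mu_i=1$ be the given distribution of types. Let $c=\{c_{ij}\}\in\mathbb{R}^{I\times J}$, let each $f_j:\mathbb{R}_+\to\mathbb{R}$ ($j\in J$) be nondecreasing and continuous with primitive $F_j(t)=\int_0^t f_j(s)\,ds$, and let $\phi=\{\phi_{kj}\}\in\mathbb{R}^{J\times J}$ be symmetric. For $\nu\in\mathcal{P}(Y):=\{\nu\in\mathbb{R}_+^J:\sum_{j\in J}\nu_j=1\}$ define the cost $$\Psi_{ij}[\nu]:=c_{ij}+f_j(\nu_j)+\sum_{k\in J}\phi_{kj}\nu_k,$$ the set of transport plans $$\Pi(\mu,\nu):=\Big\{\gamma\in\mathbb{R}_+^{I\times J}:\ \sum_{j\in J}\gamma_{ij}=\mu_i\ \forall i\in I,\ \sum_{i\in I}\gamma_{ij}=\nu_j\ \forall j\in J\Big\},$$ the optimal transport value $\mathrm{MK}(\nu):=\inf_{\gamma\in\Pi(\mu,\nu)}\sum_{i,j}c_{ij}\gamma_{ij}$, and the energy $$E(\nu):=\sum_{j\in J}F_j(\nu_j)+\frac12\sum_{k,j\in J}\phi_{kj}\nu_k\nu_j.$$ Let $\nu$ be a minimizer of $\mathrm{MK}(\nu)+E(\nu)$ over $\nu\in\mathcal{P}(Y)$, and let $\gamma\in\Pi(\mu,\nu)$ satisfy $\sum_{i,j}c_{ij}\gamma_{ij}=\mathrm{MK}(\nu)$.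 Then $\gamma$ is a Cournot-Nash equilibrium, i.e. $\gamma\in\mathbb{R}_+^{I\times J}$, $\sum_{j\in J}\gamma_{ij}=\mu_i$ for all $i\in I$, and, with $\nu_j=\sum_{i\in I}\gamma_{ij}$, for all $(i,j)\in I\times J$, $$\gamma_{ij}>0\ \Longrightarrow\ \Psi_{ij}[\nu]=\min_{k\in J}\Psi_{ik}[\nu].$$ In particular, a Cournot-Nash equilibrium exists.
   Context: A Cournot-Nash equilibrium is a matrix $\gamma\in\mathbb{R}_+^{I\times J}$ ($\gamma_{ij}$ being the probability that a player of type $x_i$ chooses strategy $y_j$) whose first marginal is $\mu$ (i.e. $\sum_{j}\gamma_{ij}=\mu_i$ for all $i$) and such that, denoting by $\nu=\{\sum_i\gamma_{ij}\}_{j\in J}$ its second marginal, $\gamma_{ij}>0$ implies $\Psi_{ij}[\nu]=\min_{k\in J}\Psi_{ik}[\nu]$. *)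

theory Defs
  imports "HOL-Analysis.Analysis"
begin

definition prob_Y :: "('j::finite \<Rightarrow> real) \<Rightarrow> bool" where
  "prob_Y \<nu> \<longleftrightarrow> (\<forall>j. \<nu> j \<ge> 0) \<and> (\<Sum>j\<in>UNIV. \<nu> j) = 1"

definition Psi :: "('i \<Rightarrow> 'j::finite \<Rightarrow> real) \<Rightarrow> ('j \<Rightarrow> real \<Rightarrow> real)
    \<Rightarrow> ('j \<Rightarrow> 'j \<Rightarrow> real) \<Rightarrow> ('j \<Rightarrow> real) \<Rightarrow> 'i \<Rightarrow> 'j \<Rightarrow> real" where
  "Psi c f \<phi> \<nu> i j = c i j + f j (\<nu> j) + (\<Sum>k\<in>UNIV. \<phi> k j * \<nu> k)"

definition plans :: "('i::finite \<Rightarrow> real) \<Rightarrow> ('j::finite \<Rightarrow> real) \<Rightarrow> ('i \<Rightarrow> 'j \<Rightarrow> real) set" where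
  "plans \<mu> \<nu> = {\<gamma>. (\<forall>i j. \<gamma> i j \<ge> 0) \<and> (\<forall>i. (\<Sum>j\<in>UNIV. \<gamma> i j) = \<mu> i)
                    \<and> (\<forall>j. (\<Sum>i\<in>UNIV. \<gamma> i j) = \<nu> j)}"

definition tcost :: "('i::finite \<Rightarrow> 'j::finite \<Rightarrow> real) \<Rightarrow> ('i \<Rightarrow> 'j \<Rightarrow> real) \<Rightarrow> real" where
  "tcost c \<gamma> = (\<Sum>i\<in>UNIV. \<Sum>j\<in>UNIV. c i j * \<gamma> i j)"

definition MK :: "('i::finite \<Rightarrow> real) \<Rightarrow> ('i \<Rightarrow> 'j::finite \<Rightarrow> real) \<Rightarrow> ('j \<Rightarrow> real) \<Rightarrow> real" where
  "MK \<mu> c \<nu> = Inf (tcost c ` plans \<mu> \<nu>)"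

definition Fprim :: "('j \<Rightarrow> real \<Rightarrow> real) \<Rightarrow> 'j \<Rightarrow> real \<Rightarrow> real" where
  "Fprim f j t = integral {0..t} (f j)"

definition energy :: "('j::finite \<Rightarrow> real \<Rightarrow> real) \<Rightarrow> ('j \<Rightarrow> 'j \<Rightarrow> real) \<Rightarrow> ('j \<Rightarrow> real) \<Rightarrow> real" where
  "energy f \<phi> \<nu> = (\<Sum>j\<in>UNIV. Fprim f j (\<nu> j))
                    + 1/2 * (\<Sum>k\<in>UNIV. \<Sum>j\<in>UNIV. \<phi> k j * \<nu> k * \<nu> j)"

definition second_marginal :: "('i::finite \<Rightarrow> 'j \<Rightarrow> real) \<Rightarrow> 'j \<Rightarrow> real" where
  "second_marginal \<gamma> j = (\<Sum>i\<in>UNIV. \<gamma> i j)"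

definition cournot_nash :: "('i::finite \<Rightarrow> real) \<Rightarrow> ('i \<Rightarrow> 'j::finite \<Rightarrow> real)
    \<Rightarrow> ('j \<Rightarrow> real \<Rightarrow> real) \<Rightarrow> ('j \<Rightarrow> 'j \<Rightarrow> real) \<Rightarrow> ('i \<Rightarrow> 'j \<Rightarrow> real) \<Rightarrow> bool" where
  "cournot_nash \<mu> c f \<phi> \<gamma> \<longleftrightarrow>
     (\<forall>i j. \<gamma> i j \<ge> 0) \<and> (\<forall>i. (\<Sum>j\<in>UNIV. \<gamma> i j) = \<mu> i) \<and>
     (\<forall>i j. \<gamma> i j > 0 \<longrightarrow>
        Psi c f \<phi> (second_marginal \<gamma>) i j = Min (range (Psi c f \<phi> (second_marginal \<gamma>) i)))"

end

theory Submission
  imports Defs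
begin

text \<open>
  Minimising \<open>MK + E\<close> over \<open>\<nu>\<close> and then choosing an optimal plan is the same as minimising the
  potential \<open>\<Sum>\<^sub>i\<^sub>j c\<^sub>i\<^sub>j \<gamma>\<^sub>i\<^sub>j + E(\<nu>)\<close>, with \<open>\<nu>\<close> the second marginal of \<open>\<gamma>\<close>, over all
  \<open>\<gamma> \<ge> 0\<close> with first marginal \<open>\<mu>\<close>. At a minimiser, moving mass \<open>e \<le> \<gamma>\<^sub>i\<^sub>j\<close> from \<open>(i,j)\<close>
  to \<open>(i,k)\<close> changes the potential by \<open>e (c\<^sub>i\<^sub>k - c\<^sub>i\<^sub>j) + \<Delta>F\<^sub>k + \<Delta>F\<^sub>j + e (\<Sum>\<^sub>l \<phi>\<^sub>l\<^sub>k \<nu>\<^sub>l - \<Sum>\<^sub>l \<phi>\<^sub>l\<^sub>j \<nu>\<^sub>l) + O(e\<^sup>2)\<close>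
  (symmetry of \<open>\<phi>\<close> makes the linear term of the quadratic part exactly this), and
  monotonicity of \<open>f\<close> bounds the increments of the primitives by \<open>e f\<^sub>k(\<nu>\<^sub>k + e)\<close> and
  \<open>-e f\<^sub>j(\<nu>\<^sub>j - e)\<close>. Dividing by \<open>e\<close> and letting \<open>e \<rightarrow> 0\<close>, continuity of \<open>f\<close> gives
  \<open>\<Psi>\<^sub>i\<^sub>j \<le> \<Psi>\<^sub>i\<^sub>k\<close>. A minimiser exists since the potential is continuous on a compact set.
\<close>

lemma mono_integral_increment_bounds:
  fixes g :: "real \<Rightarrow> real"
  assumes mono: "mono_on {0..} g" and cont: "continuous_on {0..} g"
    and "0 \<le> a" "a \<le> b"
  shows "(b - a) * g a \<le> integral {0..b} g - integral {0..a} g"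
    and "integral {0..b} g - integral {0..a} g \<le> (b - a) * g b"
proof -
  have "g integrable_on {0..b}"
    by (rule integrable_continuous_interval, rule continuous_on_subset[OF cont]) auto
  then have increment: "integral {0..b} g - integral {0..a} g = integral {a..b} g"
    and g_ab: "g integrable_on {a..b}"
    using assms(3,4) Henstock_Kurzweil_Integration.integral_combine[of 0 a b g]
    by (auto intro: integrable_subinterval_real)
  have between: "g a \<le> g x" "g x \<le> g b" if "x \<in> {a..b}" for x
    using that assms(3,4) by (auto intro!: mono_onD[OF mono])
  have "integral {a..b} (\<lambda>_. g a) \<le> integral {a..b} g"
    by (rule integral_le) (use g_ab between in auto)
  moreover have "integral {a..b} g \<le> integral {a..b} (\<lambda>_. g b)"
    by (rule integral_le) (use g_ab between in auto)
  ultimately show "(b - a) * g a \<le> integral {0..b} g - integral {0..a} g"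
    and "integral {0..b} g - integral {0..a} g \<le> (b - a) * g b"
    using assms(4) by (simp_all add: increment)
qed

definition transfer :: "'j \<Rightarrow> 'j \<Rightarrow> 'j \<Rightarrow> real" where
  "transfer j k m = (if m = k then 1 else 0) - (if m = j then 1 else 0)"

lemma sum_times_transfer:
  fixes h :: "'j::finite \<Rightarrow> real"
  shows "(\<Sum>m\<in>UNIV. h m * transfer j k m) = h k - h j"
  unfolding transfer_def right_diff_distrib sum_subtractf by (simp add: if_distrib[of "times _"] cong: if_cong)

lemma sum_along_transfer:
  fixes F :: "'j::finite \<Rightarrow> real \<Rightarrow> real"
  assumes "j \<noteq> k"
  shows "(\<Sum>m\<in>UNIV. F m (\<nu> m + e * transfer j k m)) = (\<Sum>m\<in>UNIV. F m (\<nu> m))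
           + (F k (\<nu> k + e) - F k (\<nu> k)) + (F j (\<nu> j - e) - F j (\<nu> j))"
proof -
  have "F m (\<nu> m + e * transfer j k m) = F m (\<nu> m)
          + (if m = k then F k (\<nu> k + e) - F k (\<nu> k) else 0)
          + (if m = j then F j (\<nu> j - e) - F j (\<nu> j) else 0)" for m
    using assms by (auto simp: transfer_def)
  then show ?thesis by (simp add: sum.distrib)
qed

lemma symmetric_quadratic_form_add:
  fixes \<phi> :: "'j::finite \<Rightarrow> 'j \<Rightarrow> real"
  assumes sym: "\<forall>k j. \<phi> k j = \<phi> j k"
  shows "(\<Sum>k\<in>UNIV. \<Sum>j\<in>UNIV. \<phi> k j * (\<nu> k + d k) * (\<nu> j + d j))
    = (\<Sum>k\<in>UNIV. \<Sum>j\<in>UNIV. \<phi> k j * \<nu> k * \<nu> j)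
      + 2 * (\<Sum>m\<in>UNIV. (\<Sum>l\<in>UNIV. \<phi> l m * \<nu> l) * d m)
      + (\<Sum>k\<in>UNIV. \<Sum>j\<in>UNIV. \<phi> k j * d k * d j)"
proof -
  have expand: "\<phi> k j * (\<nu> k + d k) * (\<nu> j + d j) = \<phi> k j * \<nu> k * \<nu> j + \<phi> k j * \<nu> k * d j
      + \<phi> j k * \<nu> j * d k + \<phi> k j * d k * d j" for k j
    using sym by (simp add: algebra_simps)
  have "(\<Sum>k\<in>UNIV. \<Sum>j\<in>UNIV. \<phi> k j * \<nu> k * d j) = (\<Sum>m\<in>UNIV. (\<Sum>l\<in>UNIV. \<phi> l m * \<nu> l) * d m)"
    by (subst sum.swap) (simp add: sum_distrib_right)
  moreover have "(\<Sum>k\<in>UNIV. \<Sum>j\<in>UNIV. \<phi> j k * \<nu> j * d k) = (\<Sum>m\<in>UNIV. (\<Sum>l\<in>UNIV. \<phi> l m * \<nu> l) * d m)"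
    by (simp add: sum_distrib_right)
  ultimately show ?thesis
    by (simp only: expand sum.distrib)
qed

lemma energy_along_transfer:
  fixes \<phi> :: "'j::finite \<Rightarrow> 'j \<Rightarrow> real"
  assumes sym: "\<forall>k j. \<phi> k j = \<phi> j k" and "j \<noteq> k"
  shows "energy f \<phi> (\<lambda>m. \<nu> m + e * transfer j k m) = energy f \<phi> \<nu>
     + (Fprim f k (\<nu> k + e) - Fprim f k (\<nu> k)) + (Fprim f j (\<nu> j - e) - Fprim f j (\<nu> j))
     + e * ((\<Sum>l\<in>UNIV. \<phi> l k * \<nu> l) - (\<Sum>l\<in>UNIV. \<phi> l j * \<nu> l))
     + e\<^sup>2 * (\<Sum>k'\<in>UNIV. \<Sum>j'\<in>UNIV. \<phi> k' j' * transfer j k k' * transfer j k j') / 2"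
proof -
  have linear: "(\<Sum>m\<in>UNIV. (\<Sum>l\<in>UNIV. \<phi> l m * \<nu> l) * (e * transfer j k m))
      = e * ((\<Sum>l\<in>UNIV. \<phi> l k * \<nu> l) - (\<Sum>l\<in>UNIV. \<phi> l j * \<nu> l))"
    using sum_times_transfer[of "\<lambda>m. e * (\<Sum>l\<in>UNIV. \<phi> l m * \<nu> l)" j k]
    by (simp add: algebra_simps)
  have quadratic: "(\<Sum>k'\<in>UNIV. \<Sum>j'\<in>UNIV. \<phi> k' j' * (e * transfer j k k') * (e * transfer j k j'))
      = e\<^sup>2 * (\<Sum>k'\<in>UNIV. \<Sum>j'\<in>UNIV. \<phi> k' j' * transfer j k k' * transfer j k j')"
    by (simp add: sum_distrib_left power2_eq_square mult_ac)
  show ?thesis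
    unfolding energy_def sum_along_transfer[OF assms(2)]
      symmetric_quadratic_form_add[OF sym, of \<nu> "\<lambda>m. e * transfer j k m"] linear quadratic
    by (simp add: algebra_simps)
qed

definition profiles :: "('i::finite \<Rightarrow> real) \<Rightarrow> ('i \<Rightarrow> 'j::finite \<Rightarrow> real) set" where
  "profiles \<mu> = {\<gamma>. (\<forall>i j. \<gamma> i j \<ge> 0) \<and> (\<forall>i. (\<Sum>j\<in>UNIV. \<gamma> i j) = \<mu> i)}"

definition potential :: "('i::finite \<Rightarrow> 'j::finite \<Rightarrow> real) \<Rightarrow> ('j \<Rightarrow> real \<Rightarrow> real)
    \<Rightarrow> ('j \<Rightarrow> 'j \<Rightarrow> real) \<Rightarrow> ('i \<Rightarrow> 'j \<Rightarrow> real) \<Rightarrow> real" where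
  "potential c f \<phi> \<gamma> = tcost c \<gamma> + energy f \<phi> (second_marginal \<gamma>)"

definition move_mass :: "'i \<Rightarrow> 'j \<Rightarrow> 'j \<Rightarrow> real \<Rightarrow> ('i \<Rightarrow> 'j \<Rightarrow> real) \<Rightarrow> 'i \<Rightarrow> 'j \<Rightarrow> real" where
  "move_mass i j k e \<gamma> i' m = \<gamma> i' m + (if i' = i then e * transfer j k m else 0)"

lemma profiles_iff_plans: "\<gamma> \<in> profiles \<mu> \<longleftrightarrow> \<gamma> \<in> plans \<mu> (second_marginal \<gamma>)"
  by (simp add: profiles_def plans_def second_marginal_def)

lemma profile_le_first_marginal:
  assumes "\<gamma> \<in> profiles \<mu>"
  shows "\<gamma> i j \<le> \<mu> i"
proof -
  have "\<gamma> i j \<le> (\<Sum>j'\<in>UNIV. \<gamma> i j')"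
    using assms by (intro member_le_sum) (auto simp: profiles_def)
  with assms show ?thesis by (simp add: profiles_def)
qed

lemma profile_le_second_marginal:
  assumes "\<gamma> \<in> profiles \<mu>"
  shows "\<gamma> i j \<le> second_marginal \<gamma> j"
  using assms unfolding second_marginal_def by (intro member_le_sum) (auto simp: profiles_def)

lemma prob_Y_second_marginal:
  assumes "\<gamma> \<in> profiles \<mu>" and "(\<Sum>i\<in>UNIV. \<mu> i) = 1"
  shows "prob_Y (second_marginal \<gamma>)"
proof -
  have "(\<Sum>j\<in>UNIV. second_marginal \<gamma> j) = (\<Sum>i\<in>UNIV. \<Sum>j\<in>UNIV. \<gamma> i j)"
    unfolding second_marginal_def by (rule sum.swap)
  with assms show ?thesis
    by (auto simp: prob_Y_def profiles_def second_marginal_def intro: sum_nonneg)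
qed

lemma move_mass_in_profiles:
  assumes "\<gamma> \<in> profiles \<mu>" and "j \<noteq> k" and "0 \<le> e" and "e \<le> \<gamma> i j"
  shows "move_mass i j k e \<gamma> \<in> profiles \<mu>"
proof -
  have "0 \<le> move_mass i j k e \<gamma> i' m" for i' m
    using assms by (auto simp: profiles_def move_mass_def transfer_def)
  moreover have "(\<Sum>m\<in>UNIV. move_mass i j k e \<gamma> i' m) = \<mu> i'" for i'
    using assms(1) sum_times_transfer[of "\<lambda>_. e" j k]
    by (cases "i' = i") (simp_all add: profiles_def move_mass_def sum.distrib)
  ultimately show ?thesis by (simp add: profiles_def)
qed

lemma second_marginal_move_mass:
  "second_marginal (move_mass i j k e \<gamma>) = (\<lambda>m. second_marginal \<gamma> m + e * transfer j k m)"
  by (simp add: fun_eq_iff second_marginal_def move_mass_def sum.distrib)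

lemma tcost_move_mass: "tcost c (move_mass i j k e \<gamma>) = tcost c \<gamma> + e * (c i k - c i j)"
proof -
  have "(\<Sum>i'\<in>UNIV. \<Sum>m\<in>UNIV. c i' m * (if i' = i then e * transfer j k m else 0))
      = (\<Sum>i'\<in>UNIV. if i' = i then (\<Sum>m\<in>UNIV. (e * c i m) * transfer j k m) else 0)"
    by (intro sum.cong) (auto simp: mult_ac)
  then show ?thesis
    using sum_times_transfer[of "\<lambda>m. e * c i m" j k]
    by (simp add: tcost_def move_mass_def distrib_left sum.distrib algebra_simps)
qed

lemma potential_min_first_variation:
  fixes c :: "'i::finite \<Rightarrow> 'j::finite \<Rightarrow> real"
  assumes f_mono: "\<forall>j. mono_on {0..} (f j)" and f_cont: "\<forall>j. continuous_on {0..} (f j)"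
    and sym: "\<forall>k j. \<phi> k j = \<phi> j k"
    and \<gamma>: "\<gamma> \<in> profiles \<mu>" and min: "\<forall>\<gamma>'\<in>profiles \<mu>. potential c f \<phi> \<gamma> \<le> potential c f \<phi> \<gamma>'"
    and jk: "j \<noteq> k" and e: "0 < e" "e \<le> \<gamma> i j"
  defines "\<nu> \<equiv> second_marginal \<gamma>"
  shows "0 \<le> Psi c f \<phi> \<nu> i k - Psi c f \<phi> \<nu> i j
           + (f k (\<nu> k + e) - f k (\<nu> k)) + (f j (\<nu> j) - f j (\<nu> j - e))
           + e * (\<Sum>k'\<in>UNIV. \<Sum>j'\<in>UNIV. \<phi> k' j' * transfer j k k' * transfer j k j') / 2"
    (is "0 \<le> ?variation")
proof -
  define Q where "Q = (\<Sum>k'\<in>UNIV. \<Sum>j'\<in>UNIV. \<phi> k' j' * transfer j k k' * transfer j k j')"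
  define a where "a m = (\<Sum>l\<in>UNIV. \<phi> l m * \<nu> l)" for m
  have "potential c f \<phi> \<gamma> \<le> potential c f \<phi> (move_mass i j k e \<gamma>)"
    using min move_mass_in_profiles[OF \<gamma> jk] e by auto
  then have descent: "0 \<le> e * (c i k - c i j)
      + (Fprim f k (\<nu> k + e) - Fprim f k (\<nu> k)) + (Fprim f j (\<nu> j - e) - Fprim f j (\<nu> j))
      + e * (a k - a j) + e\<^sup>2 * Q / 2"
    by (simp add: potential_def tcost_move_mass second_marginal_move_mass
        energy_along_transfer[OF sym jk] \<nu>_def a_def Q_def)
  have "0 \<le> \<nu> k"
    using \<gamma> by (auto simp: \<nu>_def second_marginal_def profiles_def intro: sum_nonneg)
  then have "Fprim f k (\<nu> k + e) - Fprim f k (\<nu> k) \<le> e * f k (\<nu> k + e)"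
    using mono_integral_increment_bounds(2)[of "f k" "\<nu> k" "\<nu> k + e"] f_mono f_cont e
    by (simp add: Fprim_def)
  moreover have "e \<le> \<nu> j"
    using profile_le_second_marginal[OF \<gamma>, of i j] e by (simp add: \<nu>_def)
  then have "Fprim f j (\<nu> j - e) - Fprim f j (\<nu> j) \<le> - (e * f j (\<nu> j - e))"
    using mono_integral_increment_bounds(1)[of "f j" "\<nu> j - e" "\<nu> j"] f_mono f_cont e
    by (simp add: Fprim_def)
  moreover have "e * ?variation = e * (c i k - c i j) + e * f k (\<nu> k + e) - e * f j (\<nu> j - e)
      + e * (a k - a j) + e\<^sup>2 * Q / 2"
    by (simp add: Psi_def a_def Q_def algebra_simps power2_eq_square)
  ultimately have "0 \<le> e * ?variation"
    using descent by linarith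
  with e show ?thesis
    by (simp add: zero_le_mult_iff)
qed

lemma Psi_le_of_potential_min:
  fixes c :: "'i::finite \<Rightarrow> 'j::finite \<Rightarrow> real"
  assumes f_mono: "\<forall>j. mono_on {0..} (f j)" and f_cont: "\<forall>j. continuous_on {0..} (f j)"
    and sym: "\<forall>k j. \<phi> k j = \<phi> j k"
    and \<gamma>: "\<gamma> \<in> profiles \<mu>" and min: "\<forall>\<gamma>'\<in>profiles \<mu>. potential c f \<phi> \<gamma> \<le> potential c f \<phi> \<gamma>'"
    and pos: "0 < \<gamma> i j"
  defines "\<nu> \<equiv> second_marginal \<gamma>"
  shows "Psi c f \<phi> \<nu> i j \<le> Psi c f \<phi> \<nu> i k"
proof (cases "j = k")
  case False
  define Q where "Q = (\<Sum>k'\<in>UNIV. \<Sum>j'\<in>UNIV. \<phi> k' j' * transfer j k k' * transfer j k j')"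
  define variation where "variation e = Psi c f \<phi> \<nu> i k - Psi c f \<phi> \<nu> i j
      + (f k (\<nu> k + e) - f k (\<nu> k)) + (f j (\<nu> j) - f j (\<nu> j - e)) + e * Q / 2" for e
  have small: "\<forall>\<^sub>F e in at_right 0. 0 < e \<and> e \<le> \<gamma> i j"
    using eventually_at_right_real[OF pos] by eventually_elim auto
  have bounds: "\<nu> k \<ge> 0" "\<gamma> i j \<le> \<nu> j"
    using \<gamma> profile_le_second_marginal[OF \<gamma>, of i j]
    by (auto simp: \<nu>_def second_marginal_def profiles_def intro: sum_nonneg)
  have in_domain: "\<forall>\<^sub>F e in at_right 0. \<nu> k + e \<in> {0..} \<and> \<nu> j - e \<in> {0..}"
    using small by eventually_elim (use bounds in auto)
  have "((\<lambda>e. f k (\<nu> k + e)) \<longlongrightarrow> f k (\<nu> k + 0)) (at_right 0)"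
    using \<open>\<nu> k \<ge> 0\<close> in_domain f_cont
    by (intro continuous_on_tendsto_compose[of "{0..}" "f k"] tendsto_intros)
       (auto elim: eventually_mono)
  moreover have "((\<lambda>e. f j (\<nu> j - e)) \<longlongrightarrow> f j (\<nu> j - 0)) (at_right 0)"
    using \<open>\<gamma> i j \<le> \<nu> j\<close> pos in_domain f_cont
    by (intro continuous_on_tendsto_compose[of "{0..}" "f j"] tendsto_intros)
       (auto elim: eventually_mono)
  ultimately have "(variation \<longlongrightarrow> variation 0) (at_right 0)"
    unfolding variation_def by (intro tendsto_intros) auto
  moreover have "\<forall>\<^sub>F e in at_right 0. 0 \<le> variation e"
    using small unfolding variation_def Q_def \<nu>_def
    by eventually_elim (use potential_min_first_variation[OF f_mono f_cont sym \<gamma> min False] in auto)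
  ultimately have "0 \<le> variation 0"
    by (intro tendsto_lowerbound) auto
  then show ?thesis
    by (simp add: variation_def)
qed simp

lemma cournot_nash_of_potential_min:
  fixes c :: "'i::finite \<Rightarrow> 'j::finite \<Rightarrow> real"
  assumes f_mono: "\<forall>j. mono_on {0..} (f j)" and f_cont: "\<forall>j. continuous_on {0..} (f j)"
    and sym: "\<forall>k j. \<phi> k j = \<phi> j k"
    and \<gamma>: "\<gamma> \<in> profiles \<mu>" and min: "\<forall>\<gamma>'\<in>profiles \<mu>. potential c f \<phi> \<gamma> \<le> potential c f \<phi> \<gamma>'"
  shows "cournot_nash \<mu> c f \<phi> \<gamma>"
  unfolding cournot_nash_def
proof (intro conjI allI impI)
  show "0 \<le> \<gamma> i j" and "(\<Sum>j\<in>UNIV. \<gamma> i j) = \<mu> i" for i j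
    using \<gamma> by (auto simp: profiles_def)
  fix i j assume "0 < \<gamma> i j"
  then show "Psi c f \<phi> (second_marginal \<gamma>) i j = Min (range (Psi c f \<phi> (second_marginal \<gamma>) i))"
    using Psi_le_of_potential_min[OF f_mono f_cont sym \<gamma> min] by (intro Min_eqI[symmetric]) auto
qed

lemma MK_le_tcost:
  assumes "\<gamma> \<in> plans \<mu> \<nu>"
  shows "MK \<mu> c \<nu> \<le> tcost c \<gamma>"
  unfolding MK_def
proof (rule cInf_lower)
  show "tcost c \<gamma> \<in> tcost c ` plans \<mu> \<nu>"
    using assms by blast
  have "- (\<Sum>i\<in>UNIV. \<Sum>j\<in>UNIV. \<bar>c i j\<bar> * \<mu> i) \<le> tcost c g" if g: "g \<in> plans \<mu> \<nu>" for g
  proof -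
    have "0 \<le> g i j" "g i j \<le> \<mu> i" for i j
      using g profile_le_first_marginal[of g \<mu> i j] by (auto simp: plans_def profiles_def)
    then have "- (\<bar>c i j\<bar> * \<mu> i) \<le> c i j * g i j" for i j
      by (smt (verit) abs_mult abs_of_nonneg abs_le_iff mult_left_mono abs_ge_zero)
    then show ?thesis
      unfolding tcost_def by (simp add: sum_negf[symmetric] sum_mono)
  qed
  then show "bdd_below (tcost c ` plans \<mu> \<nu>)"
    by (intro bdd_belowI2)
qed

lemma potential_min_of_MK_energy_min:
  fixes \<mu> :: "'i::finite \<Rightarrow> real" and c :: "'i \<Rightarrow> 'j::finite \<Rightarrow> real"
  assumes mu_sum: "(\<Sum>i\<in>UNIV. \<mu> i) = 1"
    and \<nu>_min: "\<forall>\<nu>'. prob_Y \<nu>' \<longrightarrow> MK \<mu> c \<nu> + energy f \<phi> \<nu> \<le> MK \<mu> c \<nu>' + energy f \<phi> \<nu>'"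
    and \<gamma>: "\<gamma> \<in> plans \<mu> \<nu>" and optimal: "tcost c \<gamma> = MK \<mu> c \<nu>"
  shows "\<gamma> \<in> profiles \<mu>" and "\<forall>\<gamma>'\<in>profiles \<mu>. potential c f \<phi> \<gamma> \<le> potential c f \<phi> \<gamma>'"
proof -
  have \<nu>: "second_marginal \<gamma> = \<nu>"
    using \<gamma> by (auto simp: plans_def second_marginal_def)
  then show "\<gamma> \<in> profiles \<mu>"
    using \<gamma> profiles_iff_plans by metis
  show "\<forall>\<gamma>'\<in>profiles \<mu>. potential c f \<phi> \<gamma> \<le> potential c f \<phi> \<gamma>'"
  proof
    fix \<gamma>' :: "'i \<Rightarrow> 'j \<Rightarrow> real" assume \<gamma>': "\<gamma>' \<in> profiles \<mu>"
    have "potential c f \<phi> \<gamma> = MK \<mu> c \<nu> + energy f \<phi> \<nu>"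
      by (simp add: potential_def \<nu> optimal)
    also have "\<dots> \<le> MK \<mu> c (second_marginal \<gamma>') + energy f \<phi> (second_marginal \<gamma>')"
      using \<nu>_min prob_Y_second_marginal[OF \<gamma>' mu_sum] by blast
    also have "\<dots> \<le> potential c f \<phi> \<gamma>'"
      using MK_le_tcost \<gamma>' unfolding profiles_iff_plans by (simp add: potential_def)
    finally show "potential c f \<phi> \<gamma> \<le> potential c f \<phi> \<gamma>'" .
  qed
qed

lemma continuous_on_entry [continuous_intros]:
  "continuous_on S (\<lambda>\<gamma>::'a \<Rightarrow> 'b \<Rightarrow> real. \<gamma> i j)"
proof -
  have "continuous_on UNIV (\<lambda>\<gamma>::'a \<Rightarrow> 'b \<Rightarrow> real. \<gamma> i j)"
    by (rule continuous_on_product_then_coordinatewise) simp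
  then show ?thesis
    using continuous_on_subset by blast
qed

lemma compact_PiE_UNIV:
  fixes S :: "'a \<Rightarrow> 'b::topological_space set"
  assumes "\<And>i. compact (S i)"
  shows "compact (PiE UNIV S)"
  using compactin_PiE[of "\<lambda>i. euclidean" UNIV S] assms by (simp add: euclidean_product_topology)

lemma compact_profiles: "compact (profiles \<mu> :: ('i::finite \<Rightarrow> 'j::finite \<Rightarrow> real) set)"
proof -
  define box where "box = PiE UNIV (\<lambda>i. PiE UNIV (\<lambda>j::'j. {0..\<mu> i}))"
  define constraints where "constraints =
    (\<Inter>i. \<Inter>j. {\<gamma>. 0 \<le> \<gamma> i j}) \<inter> (\<Inter>i. {\<gamma>::'i \<Rightarrow> 'j \<Rightarrow> real. (\<Sum>j\<in>UNIV. \<gamma> i j) = \<mu> i})"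
  have "\<gamma> \<in> box" if "\<gamma> \<in> profiles \<mu>" for \<gamma>
    using that profile_le_first_marginal[OF that] by (auto simp: box_def profiles_def)
  then have profiles_eq: "profiles \<mu> = box \<inter> constraints"
    by (auto simp: profiles_def constraints_def)
  have "compact box"
    unfolding box_def by (intro compact_PiE_UNIV compact_Icc)
  moreover have "closed constraints"
    unfolding constraints_def
    by (intro closed_Int closed_INT ballI closed_Collect_le closed_Collect_eq continuous_intros)
  ultimately show ?thesis
    unfolding profiles_eq by (rule compact_Int_closed)
qed

lemma continuous_on_potential:
  fixes \<mu> :: "'i::finite \<Rightarrow> real" and c :: "'i \<Rightarrow> 'j::finite \<Rightarrow> real"
  assumes mu_sum: "(\<Sum>i\<in>UNIV. \<mu> i) = 1" and f_cont: "\<forall>j. continuous_on {0..} (f j)"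
  shows "continuous_on (profiles \<mu>) (potential c f \<phi>)"
proof -
  have "continuous_on {0..1} (Fprim f j)" for j
  proof -
    have "f j integrable_on {0..1}"
      using f_cont continuous_on_subset[of "{0..}" "f j" "{0..1}"]
      by (intro integrable_continuous_interval) auto
    then show ?thesis
      unfolding Fprim_def[abs_def] by (rule indefinite_integral_continuous_1)
  qed
  moreover have marginal_in_unit: "second_marginal \<gamma> j \<in> {0..1}" if "\<gamma> \<in> profiles \<mu>" for \<gamma> j
  proof -
    have "prob_Y (second_marginal \<gamma>)"
      using prob_Y_second_marginal[OF that mu_sum] .
    moreover from this have "second_marginal \<gamma> j \<le> (\<Sum>j'\<in>UNIV. second_marginal \<gamma> j')"
      by (intro member_le_sum) (auto simp: prob_Y_def)
    ultimately show ?thesis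
      by (simp add: prob_Y_def)
  qed
  moreover have marginal_cont: "continuous_on (profiles \<mu>) (\<lambda>\<gamma>. second_marginal \<gamma> j)" for j
    unfolding second_marginal_def by (intro continuous_intros)
  ultimately have primitive_cont:
      "continuous_on (profiles \<mu>) (\<lambda>\<gamma>. Fprim f j (second_marginal \<gamma> j))" for j
    by (intro continuous_on_compose2[OF _ marginal_cont]) (use marginal_in_unit in blast)+
  show ?thesis
    unfolding potential_def[abs_def] energy_def tcost_def
    by (intro continuous_intros primitive_cont marginal_cont)
qed

lemma potential_min_exists:
  fixes \<mu> :: "'i::finite \<Rightarrow> real" and c :: "'i \<Rightarrow> 'j::finite \<Rightarrow> real"
  assumes mu_nonneg: "\<forall>i. \<mu> i \<ge> 0" and mu_sum: "(\<Sum>i\<in>UNIV. \<mu> i) = 1"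
    and f_cont: "\<forall>j. continuous_on {0..} (f j)"
  shows "\<exists>\<gamma>\<in>profiles \<mu>. \<forall>\<gamma>'\<in>profiles \<mu>. potential c f \<phi> \<gamma> \<le> potential c f \<phi> \<gamma>'"
proof (rule continuous_attains_inf)
  show "compact (profiles \<mu> :: ('i \<Rightarrow> 'j \<Rightarrow> real) set)"
    by (rule compact_profiles)
  show "continuous_on (profiles \<mu>) (potential c f \<phi>)"
    using mu_sum f_cont by (rule continuous_on_potential)
  have "(\<lambda>i (j::'j). \<mu> i / real CARD('j)) \<in> profiles \<mu>"
    using mu_nonneg by (auto simp: profiles_def)
  then show "profiles \<mu> \<noteq> ({} :: ('i \<Rightarrow> 'j \<Rightarrow> real) set)"
    by blast
qed

theorem mainTheorem1:
  fixes \<mu> :: "'i::finite \<Rightarrow> real"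
    and c :: "'i \<Rightarrow> 'j::finite \<Rightarrow> real"
    and f :: "'j \<Rightarrow> real \<Rightarrow> real"
    and \<phi> :: "'j \<Rightarrow> 'j \<Rightarrow> real"
  assumes mu_nonneg: "\<forall>i. \<mu> i \<ge> 0"
    and mu_sum: "(\<Sum>i\<in>UNIV. \<mu> i) = 1"
    and f_mono: "\<forall>j. mono_on {0..} (f j)"
    and f_cont: "\<forall>j. continuous_on {0..} (f j)"
    and phi_sym: "\<forall>k j. \<phi> k j = \<phi> j k"
  shows "(\<forall>\<nu> \<gamma>. prob_Y \<nu>
            \<and> (\<forall>\<nu>'. prob_Y \<nu>' \<longrightarrow> MK \<mu> c \<nu> + energy f \<phi> \<nu> \<le> MK \<mu> c \<nu>' + energy f \<phi> \<nu>')
            \<and> \<gamma> \<in> plans \<mu> \<nu> \<and> tcost c \<gamma> = MK \<mu> c \<nu>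
          \<longrightarrow> cournot_nash \<mu> c f \<phi> \<gamma>)
         \<and> (\<exists>\<gamma>. cournot_nash \<mu> c f \<phi> \<gamma>)"
proof (intro conjI allI impI, elim conjE)
  fix \<nu> :: "'j \<Rightarrow> real" and \<gamma> :: "'i \<Rightarrow> 'j \<Rightarrow> real"
  assume "prob_Y \<nu>"
    and \<nu>_min: "\<forall>\<nu>'. prob_Y \<nu>' \<longrightarrow> MK \<mu> c \<nu> + energy f \<phi> \<nu> \<le> MK \<mu> c \<nu>' + energy f \<phi> \<nu>'"
    and plan: "\<gamma> \<in> plans \<mu> \<nu>" and optimal: "tcost c \<gamma> = MK \<mu> c \<nu>"
  show "cournot_nash \<mu> c f \<phi> \<gamma>"
    using potential_min_of_MK_energy_min[OF mu_sum \<nu>_min plan optimal]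
    by (rule cournot_nash_of_potential_min[OF f_mono f_cont phi_sym])
next
  obtain \<gamma> :: "'i \<Rightarrow> 'j \<Rightarrow> real"
    where "\<gamma> \<in> profiles \<mu>" and "\<forall>\<gamma>'\<in>profiles \<mu>. potential c f \<phi> \<gamma> \<le> potential c f \<phi> \<gamma>'"
    using potential_min_exists[OF mu_nonneg mu_sum f_cont] by blast
  then show "\<exists>\<gamma>. cournot_nash \<mu> c f \<phi> \<gamma>"
    by (blast intro: cournot_nash_of_potential_min[OF f_mono f_cont phi_sym])
qed

end
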